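(* Let $H_A$ be a Hermitian operator on $\mathcal H_A$ (dimension $d_A$), fix an orthonormal basis $\{|j\rangle_A\}_{j=1}^{d_A}$ and an integer $1\le d_{A'}\le d_A$, and write in block form $$H_A=\begin{pmatrix} J_\parallel & C^\dagger\\ C & J_\perp\end{pmatrix},$$ where $J_\parallel$ is the compression of $H_A$ to the span $\mathcal H_{A\parallel}$ of $|1\rangle_A,\dots,|d_{A'}\rangle_A$ and $J_\perp$ its compression to the orthogonal complement. Let $H_B$ be any Hermitian operator on $\mathcal H_B$. Then $H=H_A\otimes H_B$ can simulate $H'=J_\parallel\otimes H_B$ (acting on a $d_{A'}$-dimensional system $A'$ held by Alice, and on $B$) with simulation rate $\gamma_{H'|H}\ge 1$.
   Context: All Hamiltonians are Hermitian operators on finite-dimensional Hilbert spaces. A bipartite Hamiltonian acts on $\mathcal H_A\otimes\mathcal H_B$, with system $A$ held by Alice and $B$ by Bob; it is local if it has the form $H_A\otimes I_B+I_A\otimes H_B$ and nonlocal otherwise. Simulation model: given a bipartite Hamiltonian $H$, Alice and Bob may attach or discard local ancillary systems of arbitrary finite dimension (on which $H$ acts trivially), apply arbitrary instantaneous local unitaries $U_A\otimes U_B$ (each acting on that party's system together with their ancillas), and switch $H$ on for chosen time intervals; the goal is to track (stroboscopically, for arbitrarily finely spaced times) the evolution $e^{-iH't}$ of a target bipartite Hamiltonian $H'$. The simulation rate $\gamma_{H'|H}$ is the supremum of $\gamma\ge 0$ such that evolution under $H'$ for any time $t$ can be achieved in this way (in the limit of arbitrarily fine time slicing) using $H$ for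 total time $t/\gamma$. The elementary allowed simulations are: rescaling ($cH$, $c>0$, is obtained from $H$ at rate $1/c$ and conversely); appending ancillas ($H$ and $H\otimes I_{A'B'}$ simulate each other at rate 1); adding local Hamiltonians at no cost; conjugation by local unitaries ($H$ and $UHU^\dagger$, $U=U_A\otimes U_B$, simulate each other at rate 1); and time sharing (using $H_1$ a fraction $p$ of the time and $H_2$ a fraction $1-p$ yields $pH_1+(1-p)H_2$ at rate $\ge 1$, by the Lie–Trotter formula), and compositions of these. *)

theory Defs
  imports Complex_Main "HOL-Library.Extended_Real" "Jordan_Normal_Form.Matrix"
begin

text \<open>Finite-dimensional operators are complex matrices in the fixed standard
(orthonormal) basis. Bipartite systems A (dim dA) and B (dim dB) are encoded by the
Kronecker product with index a*dB + b.\<close>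

definition adj :: "complex mat \<Rightarrow> complex mat" where
  "adj M = mat (dim_col M) (dim_row M) (\<lambda>(i,j). cnj (M $$ (j,i)))"

definition hermitian_op :: "nat \<Rightarrow> complex mat \<Rightarrow> bool" where
  "hermitian_op n M \<longleftrightarrow> M \<in> carrier_mat n n \<and> adj M = M"

definition unitary_op :: "nat \<Rightarrow> complex mat \<Rightarrow> bool" where
  "unitary_op n U \<longleftrightarrow> U \<in> carrier_mat n n \<and> adj U * U = 1\<^sub>m n \<and> U * adj U = 1\<^sub>m n"

definition isometry_op :: "nat \<Rightarrow> nat \<Rightarrow> complex mat \<Rightarrow> bool" where
  "isometry_op m n V \<longleftrightarrow> V \<in> carrier_mat m n \<and> adj V * V = 1\<^sub>m n"

definition kron :: "complex mat \<Rightarrow> complex mat \<Rightarrow> complex mat" where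
  "kron A B = mat (dim_row A * dim_row B) (dim_col A * dim_col B)
     (\<lambda>(i,j). A $$ (i div dim_row B, j div dim_col B) * B $$ (i mod dim_row B, j mod dim_col B))"

definition mexp :: "complex mat \<Rightarrow> complex mat" where
  "mexp M = mat (dim_row M) (dim_col M) (\<lambda>(i,j). (\<Sum>k. (M ^\<^sub>m k) $$ (i,j) / of_nat (fact k)))"

definition evol :: "complex mat \<Rightarrow> real \<Rightarrow> complex mat" where
  "evol H t = mexp ((- \<i> * of_real t) \<cdot>\<^sub>m H)"

definition mnorm :: "complex mat \<Rightarrow> real" where
  "mnorm M = sqrt (\<Sum>i<dim_row M. \<Sum>j<dim_col M. (cmod (M $$ (i,j)))\<^sup>2)"

definition compress :: "nat \<Rightarrow> complex mat \<Rightarrow> complex mat" where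
  "compress k M = mat k k (\<lambda>(i,j). M $$ (i,j))"

text \<open>Extension of a bipartite H on A (x) B (dims dA, dB) to the laboratory space
(A (x) R_A) (x) (B (x) R_B), acting trivially on the ancillas R_A (dim rA), R_B (dim rB).
A lab index is ((a*rA + ra)*(dB*rB) + (b*rB + rb)).\<close>
definition ext_ham :: "nat \<Rightarrow> nat \<Rightarrow> nat \<Rightarrow> nat \<Rightarrow> complex mat \<Rightarrow> complex mat" where
  "ext_ham dA dB rA rB H = mat (dA*rA*(dB*rB)) (dA*rA*(dB*rB)) (\<lambda>(i,j).
     let a = i div (rA*(dB*rB)); ra = (i div (dB*rB)) mod rA;
         b = (i mod (dB*rB)) div rB; rb = i mod rB;
         a' = j div (rA*(dB*rB)); ra' = (j div (dB*rB)) mod rA;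
         b' = (j mod (dB*rB)) div rB; rb' = j mod rB
     in if ra = ra' \<and> rb = rb' then H $$ (a*dB + b, a'*dB + b') else 0)"

fun protocol_unitary :: "complex mat \<Rightarrow> nat \<Rightarrow> (real \<times> complex mat \<times> complex mat) list \<Rightarrow> complex mat" where
  "protocol_unitary Hx N [] = 1\<^sub>m N"
| "protocol_unitary Hx N ((tau, UA, UB) # ps) =
     kron UA UB * evol Hx tau * protocol_unitary Hx N ps"

text \<open>gamma is an achievable rate for simulating H' (on A' (x) B', dims dA', dB') with
H (on A (x) B, dims dA, dB): for every target time T and accuracy eps, Alice and Bob
attach ancillas (encoding isometries V_A, V_B, i.e. ancillas in fixed states followed by a
local unitary), alternate evolution under H with local unitaries, using H for total time at
most T/gamma, and reproduce e^{-iH'T} on the encoded system up to eps.\<close>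
definition achievable_rate ::
  "nat \<Rightarrow> nat \<Rightarrow> complex mat \<Rightarrow> nat \<Rightarrow> nat \<Rightarrow> complex mat \<Rightarrow> real \<Rightarrow> bool" where
  "achievable_rate dA dB H dA' dB' H' \<gamma> \<longleftrightarrow>
     (\<forall>T > 0. \<forall>\<epsilon> > 0. \<exists>rA rB VA VB ps.
        rA > 0 \<and> rB > 0 \<and>
        isometry_op (dA*rA) dA' VA \<and> isometry_op (dB*rB) dB' VB \<and>
        (\<forall>(tau, UA, UB) \<in> set ps. tau \<ge> 0 \<and> unitary_op (dA*rA) UA \<and> unitary_op (dB*rB) UB) \<and>
        \<gamma> * sum_list (map fst ps) \<le> T \<and>
        mnorm (protocol_unitary (ext_ham dA dB rA rB H) (dA*rA*(dB*rB)) ps * kron VA VB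
               - kron VA VB * evol H' T) \<le> \<epsilon>)"

definition sim_rate ::
  "nat \<Rightarrow> nat \<Rightarrow> complex mat \<Rightarrow> nat \<Rightarrow> nat \<Rightarrow> complex mat \<Rightarrow> ereal" where
  "sim_rate dA dB H dA' dB' H' = Sup {ereal \<gamma> | \<gamma>. \<gamma> \<ge> 0 \<and> achievable_rate dA dB H dA' dB' H' \<gamma>}"

end

theory Submission
  imports Defs "HOL-Real_Asymp.Real_Asymp"
begin

(* Let R be the reflection that is +1 on the first dA' basis vectors of A and -1 on the rest;
   R (x) 1 is a local unitary. One round of the protocol evolves under H for time tau, applies
   R (x) 1, evolves again and applies R (x) 1 once more, i.e. it implements
   exp(-i tau R'HR') exp(-i tau H) = 1 - i tau (R'HR' + H) + O(tau^2) with R' = R (x) 1.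
   The averaged generator R'HR' + H has no blocks connecting the span of the first dA' basis
   vectors (tensored with B) to its complement, and on that span it is 2 J_par (x) H_B. Hence m
   rounds with tau = T/2m, which use H for total time T, converge to exp(-i T J_par (x) H_B) on
   the encoded subspace (Lie-Trotter), so rate 1 is achievable. All errors are controlled in the
   maximum row-sum norm, which is submultiplicative and dominates the matrix power series
   entrywise. *)

section \<open>Maximum row-sum norm\<close>

definition abs_row_sum :: "complex mat \<Rightarrow> nat \<Rightarrow> real" where
  "abs_row_sum M i = (\<Sum>j<dim_col M. cmod (M $$ (i,j)))"

text \<open>The 0 makes the norm of a matrix without rows 0 (Max of the empty set is unspecified).\<close>
definition max_row_sum :: "complex mat \<Rightarrow> real" where
  "max_row_sum M = Max (insert 0 (abs_row_sum M ` {..<dim_row M}))"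

lemma max_row_sum_nonneg: "0 \<le> max_row_sum M"
  unfolding max_row_sum_def by (rule Max_ge) auto

lemma abs_row_sum_le_max_row_sum: "i < dim_row M \<Longrightarrow> abs_row_sum M i \<le> max_row_sum M"
  unfolding max_row_sum_def by (rule Max_ge) auto

lemma max_row_sum_leI:
  "0 \<le> c \<Longrightarrow> (\<And>i. i < dim_row M \<Longrightarrow> abs_row_sum M i \<le> c) \<Longrightarrow>
    max_row_sum M \<le> c"
  unfolding max_row_sum_def by (subst Max_le_iff) auto

lemma norm_entry_le_max_row_sum:
  assumes "i < dim_row M" "j < dim_col M"
  shows "cmod (M $$ (i,j)) \<le> max_row_sum M"
proof -
  have "cmod (M $$ (i,j)) \<le> abs_row_sum M i"
    unfolding abs_row_sum_def using assms(2) by (intro member_le_sum) auto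
  also have "\<dots> \<le> max_row_sum M" using assms(1) by (rule abs_row_sum_le_max_row_sum)
  finally show ?thesis .
qed

lemma max_row_sum_mult:
  assumes "dim_col A = dim_row B"
  shows "max_row_sum (A * B) \<le> max_row_sum A * max_row_sum B"
proof (rule max_row_sum_leI)
  show "0 \<le> max_row_sum A * max_row_sum B" by (simp add: max_row_sum_nonneg)
  fix i assume "i < dim_row (A * B)"
  then have i: "i < dim_row A" by simp
  have "abs_row_sum (A * B) i
      = (\<Sum>j<dim_col B. cmod (\<Sum>l<dim_col A. A $$ (i,l) * B $$ (l,j)))"
    unfolding abs_row_sum_def using i assms by (simp add: scalar_prod_def lessThan_atLeast0)
  also have "\<dots> \<le> (\<Sum>j<dim_col B. \<Sum>l<dim_col A. cmod (A $$ (i,l)) * cmod (B $$ (l,j)))"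
    by (intro sum_mono order.trans[OF norm_sum]) (simp add: norm_mult)
  also have "\<dots> = (\<Sum>l<dim_col A. cmod (A $$ (i,l)) * abs_row_sum B l)"
    unfolding abs_row_sum_def by (subst sum.swap) (simp add: sum_distrib_left)
  also have "\<dots> \<le> (\<Sum>l<dim_col A. cmod (A $$ (i,l)) * max_row_sum B)"
    using assms by (intro sum_mono mult_left_mono abs_row_sum_le_max_row_sum) auto
  also have "\<dots> = abs_row_sum A i * max_row_sum B"
    unfolding abs_row_sum_def by (simp add: sum_distrib_right)
  also have "\<dots> \<le> max_row_sum A * max_row_sum B"
    using i by (intro mult_right_mono abs_row_sum_le_max_row_sum max_row_sum_nonneg)
  finally show "abs_row_sum (A * B) i \<le> max_row_sum A * max_row_sum B" .
qed

lemma max_row_sum_add: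
  assumes "A \<in> carrier_mat n k" "B \<in> carrier_mat n k"
  shows "max_row_sum (A + B) \<le> max_row_sum A + max_row_sum B"
proof (rule max_row_sum_leI)
  show "0 \<le> max_row_sum A + max_row_sum B" by (simp add: max_row_sum_nonneg)
  fix i assume i: "i < dim_row (A + B)"
  have "abs_row_sum (A + B) i \<le> abs_row_sum A i + abs_row_sum B i"
    unfolding abs_row_sum_def using i assms
    by (simp add: sum.distrib[symmetric] norm_triangle_ineq sum_mono)
  also have "\<dots> \<le> max_row_sum A + max_row_sum B"
    using i assms by (intro add_mono abs_row_sum_le_max_row_sum) auto
  finally show "abs_row_sum (A + B) i \<le> max_row_sum A + max_row_sum B" .
qed

lemma max_row_sum_diff:
  assumes "A \<in> carrier_mat n k" "B \<in> carrier_mat n k"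
  shows "max_row_sum (A - B) \<le> max_row_sum A + max_row_sum B"
proof (rule max_row_sum_leI)
  show "0 \<le> max_row_sum A + max_row_sum B" by (simp add: max_row_sum_nonneg)
  fix i assume i: "i < dim_row (A - B)"
  have "abs_row_sum (A - B) i \<le> abs_row_sum A i + abs_row_sum B i"
    unfolding abs_row_sum_def using i assms
    by (simp add: sum.distrib[symmetric] norm_triangle_ineq4 sum_mono)
  also have "\<dots> \<le> max_row_sum A + max_row_sum B"
    using i assms by (intro add_mono abs_row_sum_le_max_row_sum) auto
  finally show "abs_row_sum (A - B) i \<le> max_row_sum A + max_row_sum B" .
qed

lemma max_row_sum_smult_le: "max_row_sum (c \<cdot>\<^sub>m A) \<le> cmod c * max_row_sum A"
proof (rule max_row_sum_leI)
  show "0 \<le> cmod c * max_row_sum A" by (simp add: max_row_sum_nonneg)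
  fix i assume i: "i < dim_row (c \<cdot>\<^sub>m A)"
  have "abs_row_sum (c \<cdot>\<^sub>m A) i = cmod c * abs_row_sum A i"
    unfolding abs_row_sum_def using i by (simp add: norm_mult sum_distrib_left)
  also have "\<dots> \<le> cmod c * max_row_sum A"
    using i by (intro mult_left_mono abs_row_sum_le_max_row_sum) auto
  finally show "abs_row_sum (c \<cdot>\<^sub>m A) i \<le> cmod c * max_row_sum A" .
qed

lemma max_row_sum_smult: "max_row_sum (c \<cdot>\<^sub>m A) = cmod c * max_row_sum A"
proof (cases "c = 0")
  case True
  then show ?thesis using max_row_sum_smult_le[of 0 A] max_row_sum_nonneg[of "0 \<cdot>\<^sub>m A"] by simp
next
  case False
  have "A = inverse c \<cdot>\<^sub>m (c \<cdot>\<^sub>m A)" using False by (intro eq_matI) auto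
  then have "max_row_sum A \<le> inverse (cmod c) * max_row_sum (c \<cdot>\<^sub>m A)"
    by (metis max_row_sum_smult_le norm_inverse)
  then have "cmod c * max_row_sum A \<le> max_row_sum (c \<cdot>\<^sub>m A)"
    using False by (simp add: field_simps)
  then show ?thesis using max_row_sum_smult_le[of c A] by linarith
qed

lemma max_row_sum_one_mat: "max_row_sum (1\<^sub>m n) \<le> 1"
proof (rule max_row_sum_leI)
  fix i assume i: "i < dim_row (1\<^sub>m n)"
  have "abs_row_sum (1\<^sub>m n) i = (\<Sum>j<n. if j = i then 1 else 0)"
    unfolding abs_row_sum_def using i by (intro sum.cong) auto
  also have "\<dots> = 1" using i by simp
  finally show "abs_row_sum (1\<^sub>m n) i \<le> 1" by simp
qed simp

lemma max_row_sum_pow: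
  assumes "A \<in> carrier_mat n n"
  shows "max_row_sum (A ^\<^sub>m k) \<le> max_row_sum A ^ k"
proof (induction k)
  case 0
  then show ?case using max_row_sum_one_mat by simp
next
  case (Suc k)
  have "max_row_sum (A ^\<^sub>m Suc k) \<le> max_row_sum (A ^\<^sub>m k) * max_row_sum A"
    using assms by (simp add: max_row_sum_mult)
  also have "\<dots> \<le> max_row_sum A ^ k * max_row_sum A"
    by (intro mult_right_mono Suc max_row_sum_nonneg)
  finally show ?case by (simp add: mult.commute)
qed

lemma mnorm_nonneg: "0 \<le> mnorm M"
  unfolding mnorm_def by (intro real_sqrt_ge_zero sum_nonneg) auto

lemma mnorm_le_max_row_sum: "mnorm M \<le> real (dim_row M) * max_row_sum M"
proof -
  let ?f = "\<lambda>i j. cmod (M $$ (i,j))"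
  define S where "S = (\<Sum>i<dim_row M. abs_row_sum M i)"
  have entry_le_S: "?f i j \<le> S" if "i < dim_row M" "j < dim_col M" for i j
  proof -
    have "?f i j \<le> abs_row_sum M i"
      unfolding abs_row_sum_def using that by (intro member_le_sum) auto
    also have "\<dots> \<le> S"
      unfolding S_def abs_row_sum_def using that by (intro member_le_sum sum_nonneg) auto
    finally show ?thesis .
  qed
  have "(\<Sum>i<dim_row M. \<Sum>j<dim_col M. (?f i j)\<^sup>2) \<le> (\<Sum>i<dim_row M. \<Sum>j<dim_col M. ?f i j * S)"
    using entry_le_S by (intro sum_mono) (auto simp: power2_eq_square intro!: mult_left_mono)
  also have "\<dots> = S\<^sup>2"
    unfolding S_def abs_row_sum_def by (simp add: sum_distrib_right power2_eq_square)
  finally have "mnorm M \<le> sqrt (S\<^sup>2)" unfolding mnorm_def by (rule real_sqrt_le_mono)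
  also have "\<dots> = S" unfolding S_def abs_row_sum_def by (simp add: sum_nonneg)
  also have "\<dots> \<le> (\<Sum>i<dim_row M. max_row_sum M)"
    unfolding S_def by (intro sum_mono abs_row_sum_le_max_row_sum) auto
  finally show ?thesis by simp
qed

section \<open>Power series of matrices\<close>

lemma summable_norm_power_series_entry:
  assumes M: "M \<in> carrier_mat n n" and c: "\<And>k. 0 \<le> c k"
    and summable: "summable (\<lambda>k. c k * max_row_sum M ^ k)" and ij: "i < n" "j < n"
  shows "summable (\<lambda>k. norm (of_real (c k) * (M ^\<^sub>m k) $$ (i,j)))"
proof (rule summable_comparison_test[OF _ summable], intro exI[of _ 0] allI impI)
  fix k
  have "cmod ((M ^\<^sub>m k) $$ (i,j)) \<le> max_row_sum (M ^\<^sub>m k)"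
    by (rule norm_entry_le_max_row_sum) (use M ij in auto)
  then have "cmod ((M ^\<^sub>m k) $$ (i,j)) \<le> max_row_sum M ^ k"
    using max_row_sum_pow[OF M, of k] by linarith
  then show "norm (norm (of_real (c k) * (M ^\<^sub>m k) $$ (i,j))) \<le> c k * max_row_sum M ^ k"
    using c[of k] by (simp add: norm_mult mult_left_mono)
qed

lemma max_row_sum_power_series_le:
  assumes M: "M \<in> carrier_mat n n" and c: "\<And>k. 0 \<le> c k"
    and summable: "summable (\<lambda>k. c k * max_row_sum M ^ k)"
    and X: "X \<in> carrier_mat n n"
    and X_entry: "\<And>i j. i < n \<Longrightarrow> j < n \<Longrightarrow>
      X $$ (i,j) = (\<Sum>k. of_real (c k) * (M ^\<^sub>m k) $$ (i,j))"
  shows "max_row_sum X \<le> (\<Sum>k. c k * max_row_sum M ^ k)"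
proof (rule max_row_sum_leI)
  show "0 \<le> (\<Sum>k. c k * max_row_sum M ^ k)"
    using summable c by (intro suminf_nonneg) (auto simp: max_row_sum_nonneg)
  fix i assume "i < dim_row X"
  then have i: "i < n" using X by simp
  let ?f = "\<lambda>j k. norm (of_real (c k) * (M ^\<^sub>m k) $$ (i,j))"
  have summable_f: "summable (?f j)" if "j < n" for j
    using summable_norm_power_series_entry[OF M c summable i that] .
  have "abs_row_sum X i = (\<Sum>j<n. cmod (\<Sum>k. of_real (c k) * (M ^\<^sub>m k) $$ (i,j)))"
    unfolding abs_row_sum_def using X i by (intro sum.cong) (auto simp: X_entry)
  also have "\<dots> \<le> (\<Sum>j<n. \<Sum>k. ?f j k)"
    using summable_f by (intro sum_mono summable_norm) auto
  also have "\<dots> = (\<Sum>k. \<Sum>j<n. ?f j k)"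
    using summable_f by (intro suminf_sum[symmetric]) auto
  also have "\<dots> \<le> (\<Sum>k. c k * max_row_sum M ^ k)"
  proof (rule suminf_le)
    show "summable (\<lambda>k. \<Sum>j<n. ?f j k)" using summable_f by (intro summable_sum) auto
    fix k
    have "(\<Sum>j<n. ?f j k) = c k * abs_row_sum (M ^\<^sub>m k) i"
      unfolding abs_row_sum_def using M c[of k] by (simp add: norm_mult sum_distrib_left)
    also have "\<dots> \<le> c k * max_row_sum M ^ k"
      using M i c[of k] max_row_sum_pow[OF M, of k]
      by (intro mult_left_mono order.trans[OF abs_row_sum_le_max_row_sum]) auto
    finally show "(\<Sum>j<n. ?f j k) \<le> c k * max_row_sum M ^ k" .
  qed (rule summable)
  finally show "abs_row_sum X i \<le> (\<Sum>k. c k * max_row_sum M ^ k)" .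
qed

lemma sums_exp_real: "(\<lambda>k. (1 / fact k) * r ^ k) sums exp (r::real)"
  using exp_converges[of r] by (simp add: divide_inverse mult.commute)

lemma mexp_carrier_mat [simp]: "M \<in> carrier_mat n n \<Longrightarrow> mexp M \<in> carrier_mat n n"
  unfolding mexp_def by simp

lemma mexp_entry:
  assumes "M \<in> carrier_mat n n" "i < n" "j < n"
  shows "mexp M $$ (i,j) = (\<Sum>k. of_real (1 / fact k) * (M ^\<^sub>m k) $$ (i,j))"
  using assms by (simp add: mexp_def divide_inverse mult.commute)

lemma mexp_entry_sums:
  assumes M: "M \<in> carrier_mat n n" and ij: "i < n" "j < n"
  shows "(\<lambda>k. of_real (1 / fact k) * (M ^\<^sub>m k) $$ (i,j)) sums (mexp M $$ (i,j))"
proof -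
  have "summable (\<lambda>k. norm (of_real (1 / fact k) * (M ^\<^sub>m k) $$ (i,j)))"
    using sums_exp_real[of "max_row_sum M"]
    by (intro summable_norm_power_series_entry[OF M _ _ ij]) (auto simp: sums_summable)
  then have "summable (\<lambda>k. of_real (1 / fact k) * (M ^\<^sub>m k) $$ (i,j))"
    by (rule summable_norm_cancel)
  then show ?thesis unfolding mexp_entry[OF M ij] by (rule summable_sums)
qed

lemma max_row_sum_mexp_minus_poly:
  fixes p :: "nat \<Rightarrow> real"
  assumes M: "M \<in> carrier_mat n n" and p: "\<And>k. k \<le> d \<Longrightarrow> 0 \<le> p k \<and> p k \<le> 1 / fact k"
    and X: "X \<in> carrier_mat n n"
    and X_entry: "\<And>i j. i < n \<Longrightarrow> j < n \<Longrightarrow>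
      X $$ (i,j) = mexp M $$ (i,j) - (\<Sum>k\<le>d. of_real (p k) * (M ^\<^sub>m k) $$ (i,j))"
  shows "max_row_sum X \<le> exp (max_row_sum M) - (\<Sum>k\<le>d. p k * max_row_sum M ^ k)"
proof -
  define c where "c k = 1 / fact k - (if k \<in> {..d} then p k else 0)" for k
  have c_sums: "(\<lambda>k. c k * r ^ k) sums (exp r - (\<Sum>k\<le>d. p k * r ^ k))" for r :: real
  proof -
    have "(\<lambda>k. c k * r ^ k) = (\<lambda>k. 1 / fact k * r ^ k - (if k \<in> {..d} then p k * r ^ k else 0))"
      by (simp add: c_def fun_eq_iff left_diff_distrib)
    then show ?thesis
      using sums_diff[OF sums_exp_real[of r] sums_If_finite_set[of "{..d}" "\<lambda>k. p k * r ^ k"]] by simp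
  qed
  have "max_row_sum X \<le> (\<Sum>k. c k * max_row_sum M ^ k)"
  proof (rule max_row_sum_power_series_le[OF M _ _ X])
    show "0 \<le> c k" for k using p[of k] by (simp add: c_def)
    show "summable (\<lambda>k. c k * max_row_sum M ^ k)" using c_sums sums_summable by blast
    fix i j assume ij: "i < n" "j < n"
    have "(\<lambda>k. of_real (c k) * (M ^\<^sub>m k) $$ (i,j))
        = (\<lambda>k. of_real (1 / fact k) * (M ^\<^sub>m k) $$ (i,j)
          - (if k \<in> {..d} then of_real (p k) * (M ^\<^sub>m k) $$ (i,j) else 0))"
      by (simp add: c_def fun_eq_iff left_diff_distrib)
    then have "(\<lambda>k. of_real (c k) * (M ^\<^sub>m k) $$ (i,j)) sums
        (mexp M $$ (i,j) - (\<Sum>k\<le>d. of_real (p k) * (M ^\<^sub>m k) $$ (i,j)))"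
      using sums_diff[OF mexp_entry_sums[OF M ij]
          sums_If_finite_set[of "{..d}" "\<lambda>k. of_real (p k) * (M ^\<^sub>m k) $$ (i,j)"]] by simp
    then show "X $$ (i,j) = (\<Sum>k. of_real (c k) * (M ^\<^sub>m k) $$ (i,j))"
      using X_entry[OF ij] by (simp add: sums_iff)
  qed
  then show ?thesis using c_sums[of "max_row_sum M"] by (simp add: sums_iff)
qed

lemma max_row_sum_mexp:
  assumes "M \<in> carrier_mat n n"
  shows "max_row_sum (mexp M) \<le> exp (max_row_sum M)"
  using max_row_sum_mexp_minus_poly[of M n 0 "\<lambda>_. 0" "mexp M"] assms by simp

lemma max_row_sum_mexp_minus_one:
  assumes "M \<in> carrier_mat n n"
  shows "max_row_sum (mexp M - 1\<^sub>m n) \<le> exp (max_row_sum M) - 1"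
  using max_row_sum_mexp_minus_poly[of M n 0 "\<lambda>_. 1" "mexp M - 1\<^sub>m n"] assms
  by (simp add: minus_carrier_mat)

lemma max_row_sum_mexp_minus_linear:
  assumes "M \<in> carrier_mat n n"
  shows "max_row_sum (mexp M - 1\<^sub>m n - M) \<le> exp (max_row_sum M) - 1 - max_row_sum M"
proof -
  have "max_row_sum (mexp M - 1\<^sub>m n - M) \<le> exp (max_row_sum M) - (\<Sum>k\<le>1. 1 * max_row_sum M ^ k)"
    by (rule max_row_sum_mexp_minus_poly[OF assms]) (use assms in \<open>auto simp: le_Suc_eq minus_carrier_mat\<close>)
  then show ?thesis by simp
qed

lemma sum_choose_Suc_split:
  fixes g :: "nat \<Rightarrow> 'a::comm_semiring_1"
  shows "(\<Sum>k\<le>Suc m. of_nat (Suc m choose k) * g k)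
       = (\<Sum>k\<le>m. of_nat (m choose k) * g k) + (\<Sum>k\<le>m. of_nat (m choose k) * g (Suc k))"
proof -
  have "(\<Sum>k\<le>Suc m. of_nat (Suc m choose k) * g k)
      = g 0 + (\<Sum>k\<le>m. of_nat (m choose Suc k) * g (Suc k)) + (\<Sum>k\<le>m. of_nat (m choose k) * g (Suc k))"
    by (subst sum.atMost_Suc_shift) (simp add: sum.distrib algebra_simps)
  also have "g 0 + (\<Sum>k\<le>m. of_nat (m choose Suc k) * g (Suc k)) = (\<Sum>k\<le>Suc m. of_nat (m choose k) * g k)"
    by (subst sum.atMost_Suc_shift) simp
  also have "\<dots> = (\<Sum>k\<le>m. of_nat (m choose k) * g k)" by (simp add: binomial_eq_0)
  finally show ?thesis .
qed

lemma pow_one_plus_smult_entry: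
  fixes A :: "complex mat"
  assumes A: "A \<in> carrier_mat n n" and ij: "i < n" "j < n"
  shows "((1\<^sub>m n + c \<cdot>\<^sub>m A) ^\<^sub>m m) $$ (i,j)
    = (\<Sum>k\<le>m. of_nat (m choose k) * (c ^ k * (A ^\<^sub>m k) $$ (i,j)))"
  using ij
proof (induction m arbitrary: j)
  case 0
  then show ?case using A by simp
next
  case (Suc m)
  let ?B = "(1\<^sub>m n + c \<cdot>\<^sub>m A) ^\<^sub>m m"
  have B: "?B \<in> carrier_mat n n" using A by simp
  have "((1\<^sub>m n + c \<cdot>\<^sub>m A) ^\<^sub>m Suc m) $$ (i,j)
      = (\<Sum>l<n. ?B $$ (i,l) * ((if l = j then 1 else 0) + c * A $$ (l,j)))"
    using Suc.prems A B by (auto simp: scalar_prod_def lessThan_atLeast0 intro!: sum.cong)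
  also have "\<dots> = (\<Sum>l<n. ?B $$ (i,l) * (if l = j then 1 else 0)) + c * (\<Sum>l<n. ?B $$ (i,l) * A $$ (l,j))"
    by (simp add: distrib_left sum.distrib sum_distrib_left mult.left_commute[of c])
  also have "(\<Sum>l<n. ?B $$ (i,l) * (if l = j then 1 else 0)) = ?B $$ (i,j)"
    using Suc.prems by (simp add: if_distrib cong: if_cong)
  also have "(\<Sum>l<n. ?B $$ (i,l) * A $$ (l,j))
      = (\<Sum>l<n. \<Sum>k\<le>m. of_nat (m choose k) * c ^ k * ((A ^\<^sub>m k) $$ (i,l) * A $$ (l,j)))"
    using Suc.prems by (intro sum.cong refl) (simp add: Suc.IH sum_distrib_left sum_distrib_right algebra_simps)
  also have "\<dots> = (\<Sum>k\<le>m. of_nat (m choose k) * c ^ k * (A ^\<^sub>m Suc k) $$ (i,j))"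
    using Suc.prems A by (subst sum.swap)
      (auto simp: scalar_prod_def lessThan_atLeast0 sum_distrib_left intro!: sum.cong)
  finally show ?case
    unfolding sum_choose_Suc_split[of m "\<lambda>k. c ^ k * (A ^\<^sub>m k) $$ (i,j)"] Suc.IH[OF Suc.prems]
    by (simp add: sum_distrib_left algebra_simps)
qed

lemma max_row_sum_mexp_minus_binomial:
  assumes A: "A \<in> carrier_mat n n" and m: "m > 0"
  shows "max_row_sum (mexp A - (1\<^sub>m n + of_real (1 / real m) \<cdot>\<^sub>m A) ^\<^sub>m m)
    \<le> exp (max_row_sum A) - (1 + max_row_sum A / real m) ^ m"
proof -
  define p where "p k = real (m choose k) / real m ^ k" for k
  have "max_row_sum (mexp A - (1\<^sub>m n + of_real (1 / real m) \<cdot>\<^sub>m A) ^\<^sub>m m)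
      \<le> exp (max_row_sum A) - (\<Sum>k\<le>m. p k * max_row_sum A ^ k)"
  proof (rule max_row_sum_mexp_minus_poly[OF A])
    show "0 \<le> p k \<and> p k \<le> 1 / fact k" for k
    proof -
      have "real (m choose k) * fact k \<le> real m ^ k"
        using binomial_fact_pow[of m k] by (metis of_nat_fact of_nat_le_iff of_nat_mult of_nat_power)
      then show ?thesis using m by (simp add: p_def field_simps)
    qed
    fix i j assume ij: "i < n" "j < n"
    show "(mexp A - (1\<^sub>m n + of_real (1 / real m) \<cdot>\<^sub>m A) ^\<^sub>m m) $$ (i,j)
        = mexp A $$ (i,j) - (\<Sum>k\<le>m. of_real (p k) * (A ^\<^sub>m k) $$ (i,j))"
      using A ij by (simp add: pow_one_plus_smult_entry p_def power_divide)
  qed (use A in \<open>simp add: minus_carrier_mat\<close>)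
  also have "(\<Sum>k\<le>m. p k * max_row_sum A ^ k) = (1 + max_row_sum A / real m) ^ m"
    by (subst add.commute, subst binomial_ring) (simp add: p_def power_divide)
  finally show ?thesis .
qed

section \<open>Product formula\<close>

lemma max_row_sum_pow_diff_le:
  assumes Y: "Y \<in> carrier_mat n n" and Z: "Z \<in> carrier_mat n n"
    and K: "max_row_sum Y \<le> K" "max_row_sum Z \<le> K" "1 \<le> K"
  shows "max_row_sum (Y ^\<^sub>m m - Z ^\<^sub>m m) \<le> real m * K ^ m * max_row_sum (Y - Z)"
proof (induction m)
  case 0
  then show ?case using Y Z by (simp add: max_row_sum_def abs_row_sum_def)
next
  case (Suc m)
  have Ym: "Y ^\<^sub>m m \<in> carrier_mat n n" and Zm: "Z ^\<^sub>m m \<in> carrier_mat n n" using Y Z by auto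
  have "Y ^\<^sub>m m * (Y - Z) = Y ^\<^sub>m m * Y - Y ^\<^sub>m m * Z"
    using Ym Y Z by (rule mult_minus_distrib_mat)
  moreover have "(Y ^\<^sub>m m - Z ^\<^sub>m m) * Z = Y ^\<^sub>m m * Z - Z ^\<^sub>m m * Z"
    using Ym Zm Z by (rule minus_mult_distrib_mat)
  ultimately have split:
      "Y ^\<^sub>m Suc m - Z ^\<^sub>m Suc m = Y ^\<^sub>m m * (Y - Z) + (Y ^\<^sub>m m - Z ^\<^sub>m m) * Z"
    using Ym Zm Y Z by (intro eq_matI) auto
  have "max_row_sum (Y ^\<^sub>m Suc m - Z ^\<^sub>m Suc m)
      \<le> max_row_sum (Y ^\<^sub>m m) * max_row_sum (Y - Z) + max_row_sum (Y ^\<^sub>m m - Z ^\<^sub>m m) * max_row_sum Z"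
    unfolding split using Ym Zm Y Z
    by (intro order.trans[OF max_row_sum_add] add_mono max_row_sum_mult) (auto simp: minus_carrier_mat)
  also have "\<dots> \<le> K ^ m * max_row_sum (Y - Z) + (real m * K ^ m * max_row_sum (Y - Z)) * K"
    using Suc.IH K max_row_sum_pow[OF Y, of m] power_mono[OF K(1) max_row_sum_nonneg, of m]
    by (intro add_mono mult_mono) (auto simp: max_row_sum_nonneg)
  also have "\<dots> \<le> K ^ Suc m * max_row_sum (Y - Z) + (real m * K ^ m * max_row_sum (Y - Z)) * K"
    using K(3) max_row_sum_nonneg[of "Y - Z"] by (intro add_mono mult_right_mono power_increasing) auto
  also have "\<dots> = real (Suc m) * K ^ Suc m * max_row_sum (Y - Z)"
    by (simp add: algebra_simps)
  finally show ?case .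
qed

lemma max_row_sum_mult_minus_first_order:
  assumes P: "P \<in> carrier_mat n n" and Q: "Q \<in> carrier_mat n n"
    and a: "a \<in> carrier_mat n n" and b: "b \<in> carrier_mat n n"
  shows "max_row_sum (P * Q - (1\<^sub>m n + (a + b)))
    \<le> max_row_sum (P - 1\<^sub>m n) * max_row_sum (Q - 1\<^sub>m n)
      + max_row_sum (P - 1\<^sub>m n - a) + max_row_sum (Q - 1\<^sub>m n - b)"
proof -
  have Q1: "Q - 1\<^sub>m n \<in> carrier_mat n n" using Q by (simp add: minus_carrier_mat)
  have "(P - 1\<^sub>m n) * (Q - 1\<^sub>m n) = P * (Q - 1\<^sub>m n) - 1\<^sub>m n * (Q - 1\<^sub>m n)"
    using P one_carrier_mat Q1 by (rule minus_mult_distrib_mat)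
  also have "P * (Q - 1\<^sub>m n) = P * Q - P * 1\<^sub>m n"
    using P Q one_carrier_mat by (rule mult_minus_distrib_mat)
  finally have "P * Q - (1\<^sub>m n + (a + b))
      = (P - 1\<^sub>m n) * (Q - 1\<^sub>m n) + (P - 1\<^sub>m n - a) + (Q - 1\<^sub>m n - b)"
    using P Q a b by (intro eq_matI) auto
  then show ?thesis using P Q a b
    by (simp only:) (intro order.trans[OF max_row_sum_add] add_mono max_row_sum_mult order.refl;
        auto simp: minus_carrier_mat)
qed

section \<open>Reflections and coordinate inclusions\<close>

definition reflection_mat :: "nat \<Rightarrow> nat \<Rightarrow> complex mat" where
  "reflection_mat n k = mat n n (\<lambda>(i,j). if i = j then (if i < k then 1 else -1) else 0)"

definition inclusion_mat :: "nat \<Rightarrow> nat \<Rightarrow> complex mat" where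
  "inclusion_mat n k = mat n k (\<lambda>(i,j). if i = j then 1 else 0)"

lemma reflection_mat_carrier [simp]: "reflection_mat n k \<in> carrier_mat n n"
  and reflection_mat_dim [simp]: "dim_row (reflection_mat n k) = n" "dim_col (reflection_mat n k) = n"
  by (simp_all add: reflection_mat_def)

lemma reflection_mat_entry [simp]:
  "i < n \<Longrightarrow> j < n \<Longrightarrow>
    reflection_mat n k $$ (i,j) = (if i = j then (if i < k then 1 else -1) else 0)"
  by (simp add: reflection_mat_def)

lemma inclusion_mat_carrier [simp]: "inclusion_mat n k \<in> carrier_mat n k"
  and inclusion_mat_dim [simp]: "dim_row (inclusion_mat n k) = n" "dim_col (inclusion_mat n k) = k"
  by (simp_all add: inclusion_mat_def)

lemma inclusion_mat_entry [simp]: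
  "i < n \<Longrightarrow> j < k \<Longrightarrow> inclusion_mat n k $$ (i,j) = (if i = j then 1 else 0)"
  by (simp add: inclusion_mat_def)

lemma reflection_mat_mult_entry:
  assumes M: "M \<in> carrier_mat n p" and ij: "i < n" "j < p"
  shows "(reflection_mat n k * M) $$ (i,j) = (if i < k then M $$ (i,j) else - M $$ (i,j))"
proof -
  let ?s = "if i < k then 1 else -1 :: complex"
  have "(reflection_mat n k * M) $$ (i,j) = (\<Sum>l<n. (if i = l then ?s else 0) * M $$ (l,j))"
    using M ij by (auto simp: reflection_mat_def scalar_prod_def lessThan_atLeast0 intro!: sum.cong)
  also have "\<dots> = (\<Sum>l<n. if l = i then ?s * M $$ (i,j) else 0)" by (intro sum.cong) auto
  finally show ?thesis using ij by simp
qed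

lemma mult_reflection_mat_entry:
  assumes M: "M \<in> carrier_mat p n" and ij: "i < p" "j < n"
  shows "(M * reflection_mat n k) $$ (i,j) = (if j < k then M $$ (i,j) else - M $$ (i,j))"
proof -
  let ?s = "if j < k then 1 else -1 :: complex"
  have "(M * reflection_mat n k) $$ (i,j) = (\<Sum>l<n. M $$ (i,l) * (if l = j then ?s else 0))"
    using M ij by (auto simp: reflection_mat_def scalar_prod_def lessThan_atLeast0 intro!: sum.cong)
  also have "\<dots> = (\<Sum>l<n. if l = j then M $$ (i,j) * ?s else 0)" by (intro sum.cong) auto
  finally show ?thesis using ij by simp
qed

lemma reflection_conj_entry:
  assumes M: "M \<in> carrier_mat n n" and ij: "i < n" "j < n"
  shows "(reflection_mat n k * M * reflection_mat n k) $$ (i,j)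
    = (if (i < k) = (j < k) then M $$ (i,j) else - M $$ (i,j))"
proof -
  have "reflection_mat n k * M \<in> carrier_mat n n"
    using mult_carrier_mat[OF reflection_mat_carrier M] .
  then show ?thesis
    using mult_reflection_mat_entry[OF _ ij] reflection_mat_mult_entry[OF M ij] by auto
qed

lemma reflection_conj_minus_one:
  assumes "X \<in> carrier_mat n n"
  shows "reflection_mat n k * (X - 1\<^sub>m n) * reflection_mat n k
    = reflection_mat n k * X * reflection_mat n k - 1\<^sub>m n"
  using assms
  by (intro eq_matI) (auto simp: reflection_conj_entry minus_carrier_mat simp del: index_mult_mat(1))

lemma reflection_conj_diff:
  assumes "X \<in> carrier_mat n n" "Y \<in> carrier_mat n n"
  shows "reflection_mat n k * (X - Y) * reflection_mat n k
    = reflection_mat n k * X * reflection_mat n k - reflection_mat n k * Y * reflection_mat n k"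
  using assms
  by (intro eq_matI) (auto simp: reflection_conj_entry minus_carrier_mat simp del: index_mult_mat(1))

lemma max_row_sum_reflection_conj:
  assumes M: "M \<in> carrier_mat n n"
  shows "max_row_sum (reflection_mat n k * M * reflection_mat n k) \<le> max_row_sum M"
proof (rule max_row_sum_leI[OF max_row_sum_nonneg])
  fix i assume "i < dim_row (reflection_mat n k * M * reflection_mat n k)"
  then have i: "i < n" by simp
  have "abs_row_sum (reflection_mat n k * M * reflection_mat n k) i = abs_row_sum M i"
    unfolding abs_row_sum_def using M i
    by (intro sum.cong) (auto simp: reflection_conj_entry simp del: index_mult_mat(1))
  also have "\<dots> \<le> max_row_sum M" using M i by (intro abs_row_sum_le_max_row_sum) auto
  finally show "abs_row_sum (reflection_mat n k * M * reflection_mat n k) i \<le> max_row_sum M" .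
qed

lemma adj_one_mat: "adj (1\<^sub>m n) = 1\<^sub>m n"
  unfolding adj_def by (intro eq_matI) auto

lemma unitary_one_mat: "unitary_op n (1\<^sub>m n)"
  unfolding unitary_op_def adj_one_mat by simp

lemma isometry_one_mat: "isometry_op n n (1\<^sub>m n)"
  unfolding isometry_op_def adj_one_mat by simp

lemma unitary_reflection_mat: "unitary_op n (reflection_mat n k)"
proof -
  have adj: "adj (reflection_mat n k) = reflection_mat n k"
    unfolding adj_def reflection_mat_def by (intro eq_matI) auto
  have "reflection_mat n k * reflection_mat n k = 1\<^sub>m n"
    by (intro eq_matI)
      (auto simp: reflection_mat_mult_entry[OF reflection_mat_carrier] simp del: index_mult_mat(1))
  then show ?thesis unfolding unitary_op_def adj by simp
qed

lemma inclusion_mat_mult_entry: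
  assumes X: "X \<in> carrier_mat k p" and ij: "i < n" "j < p"
  shows "(inclusion_mat n k * X) $$ (i,j) = (if i < k then X $$ (i,j) else 0)"
proof -
  have "(inclusion_mat n k * X) $$ (i,j) = (\<Sum>l<k. (if i = l then 1 else 0) * X $$ (l,j))"
    using X ij by (auto simp: inclusion_mat_def scalar_prod_def lessThan_atLeast0 intro!: sum.cong)
  also have "\<dots> = (\<Sum>l<k. if l = i then X $$ (i,j) else 0)" by (intro sum.cong) auto
  finally show ?thesis by simp
qed

lemma mult_inclusion_mat_entry:
  assumes X: "X \<in> carrier_mat p n" and k: "k \<le> n" and ij: "i < p" "j < k"
  shows "(X * inclusion_mat n k) $$ (i,j) = X $$ (i,j)"
proof -
  have "(X * inclusion_mat n k) $$ (i,j) = (\<Sum>l<n. X $$ (i,l) * (if l = j then 1 else 0))"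
    using X ij by (auto simp: inclusion_mat_def scalar_prod_def lessThan_atLeast0 intro!: sum.cong)
  also have "\<dots> = (\<Sum>l<n. if l = j then X $$ (i,j) else 0)" by (intro sum.cong) auto
  finally show ?thesis using ij k by simp
qed

lemma max_row_sum_inclusion_mat: "max_row_sum (inclusion_mat n k) \<le> 1"
proof (rule max_row_sum_leI)
  fix i assume i: "i < dim_row (inclusion_mat n k)"
  have "abs_row_sum (inclusion_mat n k) i = (\<Sum>j<k. if j = i then 1 else 0)"
    unfolding abs_row_sum_def using i by (intro sum.cong) (auto simp: inclusion_mat_def)
  then show "abs_row_sum (inclusion_mat n k) i \<le> 1" by simp
qed simp

lemma isometry_inclusion_mat:
  assumes "k \<le> n"
  shows "isometry_op n k (inclusion_mat n k)"
proof -
  have adj: "adj (inclusion_mat n k) = inclusion_mat k n"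
    unfolding adj_def inclusion_mat_def by (intro eq_matI) auto
  have "inclusion_mat k n * inclusion_mat n k = 1\<^sub>m k"
    using assms
    by (intro eq_matI)
      (auto simp: inclusion_mat_mult_entry[OF inclusion_mat_carrier] simp del: index_mult_mat(1))
  then show ?thesis unfolding isometry_op_def adj by simp
qed

text \<open>Averaging B with its conjugate by the reflection kills the off-diagonal blocks.\<close>
lemma reflection_average_mult_inclusion:
  assumes B: "B \<in> carrier_mat n n" and k: "k \<le> n"
  shows "(1\<^sub>m n + (reflection_mat n k * B * reflection_mat n k + B)) * inclusion_mat n k
    = inclusion_mat n k * (1\<^sub>m k + 2 \<cdot>\<^sub>m compress k B)"
proof (rule eq_matI)
  have C: "1\<^sub>m k + 2 \<cdot>\<^sub>m compress k B \<in> carrier_mat k k" by (simp add: compress_def)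
  fix i j
  assume "i < dim_row (inclusion_mat n k * (1\<^sub>m k + 2 \<cdot>\<^sub>m compress k B))"
    and "j < dim_col (inclusion_mat n k * (1\<^sub>m k + 2 \<cdot>\<^sub>m compress k B))"
  then have i: "i < n" and j: "j < k" by (auto simp: compress_def)
  have "((1\<^sub>m n + (reflection_mat n k * B * reflection_mat n k + B)) * inclusion_mat n k) $$ (i,j)
      = (1\<^sub>m n + (reflection_mat n k * B * reflection_mat n k + B)) $$ (i,j)"
    using B k i j by (intro mult_inclusion_mat_entry) auto
  also have "\<dots> = (if i < k then (1\<^sub>m k + 2 \<cdot>\<^sub>m compress k B) $$ (i,j) else 0)"
    using B k i j carrier_matD[OF B] by (auto simp: reflection_conj_entry compress_def simp del: index_mult_mat(1))
  also have "\<dots> = (inclusion_mat n k * (1\<^sub>m k + 2 \<cdot>\<^sub>m compress k B)) $$ (i,j)"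
    using C i j by (simp add: inclusion_mat_mult_entry)
  finally show "((1\<^sub>m n + (reflection_mat n k * B * reflection_mat n k + B)) * inclusion_mat n k) $$ (i,j)
      = (inclusion_mat n k * (1\<^sub>m k + 2 \<cdot>\<^sub>m compress k B)) $$ (i,j)" .
qed (use carrier_matD[OF B] in \<open>auto simp: compress_def\<close>)

lemma pow_mat_Suc_left:
  assumes "A \<in> carrier_mat n n"
  shows "A * A ^\<^sub>m m = A ^\<^sub>m Suc m"
proof (induction m)
  case 0
  then show ?case using assms by simp
next
  case (Suc m)
  have "A * A ^\<^sub>m Suc m = (A * A ^\<^sub>m m) * A"
    using assms by (simp add: assoc_mult_mat[symmetric, of _ n n _ n _ n])
  then show ?case using Suc by simp
qed

lemma pow_mat_double:
  assumes A: "A \<in> carrier_mat n n"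
  shows "A ^\<^sub>m (2 * m) = (A * A) ^\<^sub>m m"
proof (induction m)
  case (Suc m)
  have "A ^\<^sub>m (2 * Suc m) = A ^\<^sub>m (2 * m) * A * A" by simp
  also have "\<dots> = (A * A) ^\<^sub>m m * (A * A)"
    using A Suc by (simp add: assoc_mult_mat[of _ n n _ n _ n])
  finally show ?case by simp
qed simp

lemma pow_mat_intertwine:
  assumes X: "X \<in> carrier_mat n n" and Y: "Y \<in> carrier_mat k k" and V: "V \<in> carrier_mat n k"
    and XV: "X * V = V * Y"
  shows "X ^\<^sub>m m * V = V * Y ^\<^sub>m m"
proof (induction m)
  case 0
  then show ?case using X Y V by simp
next
  case (Suc m)
  have "X ^\<^sub>m Suc m * V = X ^\<^sub>m m * (X * V)"
    using X V by (simp add: assoc_mult_mat[of _ n n _ n _ k])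
  also have "\<dots> = (X ^\<^sub>m m * V) * Y"
    unfolding XV using X V Y by (simp add: assoc_mult_mat[of _ n n _ k _ k])
  also have "\<dots> = V * Y ^\<^sub>m Suc m"
    unfolding Suc using X V Y by (simp add: assoc_mult_mat[of _ n k _ k _ k])
  finally show ?case .
qed

lemma max_row_sum_intertwined_diff:
  assumes Y: "Y \<in> carrier_mat n n" and Z: "Z \<in> carrier_mat n n"
    and F: "F \<in> carrier_mat k k" and Z': "Z' \<in> carrier_mat k k"
    and V: "V \<in> carrier_mat n k" and ZV: "Z * V = V * Z'" and V_le: "max_row_sum V \<le> 1"
  shows "max_row_sum (Y * V - V * F) \<le> max_row_sum (Y - Z) + max_row_sum (F - Z')"
proof -
  have "(Y - Z) * V = Y * V - Z * V" using Y Z V by (rule minus_mult_distrib_mat)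
  moreover have "V * (F - Z') = V * F - V * Z'" using V F Z' by (rule mult_minus_distrib_mat)
  ultimately have "Y * V - V * F = (Y - Z) * V - V * (F - Z')"
    using Y Z V F Z' ZV by (intro eq_matI) auto
  then have "max_row_sum (Y * V - V * F)
      \<le> max_row_sum (Y - Z) * max_row_sum V + max_row_sum V * max_row_sum (F - Z')"
    using Y Z V F Z'
    by (simp only:) (intro order.trans[OF max_row_sum_diff] add_mono max_row_sum_mult;
        auto simp: minus_carrier_mat)
  also have "\<dots> \<le> max_row_sum (Y - Z) + max_row_sum (F - Z')"
    using V_le max_row_sum_nonneg[of "Y - Z"] max_row_sum_nonneg[of "F - Z'"]
    by (intro add_mono mult_left_le mult_left_le_one_le) (auto simp: max_row_sum_nonneg)
  finally show ?thesis .
qed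

section \<open>Trotter approximation of the pinched evolution\<close>

lemma max_row_sum_reflection_trotter_step:
  assumes b: "b \<in> carrier_mat n n"
  shows "max_row_sum (reflection_mat n k * mexp b * reflection_mat n k * mexp b
      - (1\<^sub>m n + (reflection_mat n k * b * reflection_mat n k + b)))
    \<le> (exp (max_row_sum b) - 1)\<^sup>2 + 2 * (exp (max_row_sum b) - 1 - max_row_sum b)"
proof -
  let ?R = "reflection_mat n k" and ?E = "mexp b" and ?x = "max_row_sum b"
  have E: "?E \<in> carrier_mat n n" using b by simp
  have E1: "max_row_sum (?E - 1\<^sub>m n) \<le> exp ?x - 1"
    using b by (rule max_row_sum_mexp_minus_one)
  have E2: "max_row_sum (?E - 1\<^sub>m n - b) \<le> exp ?x - 1 - ?x"
    using b by (rule max_row_sum_mexp_minus_linear)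
  have E1_carrier: "?E - 1\<^sub>m n \<in> carrier_mat n n"
    and E2_carrier: "?E - 1\<^sub>m n - b \<in> carrier_mat n n"
    using E b by (simp_all add: minus_carrier_mat)
  have "?R * ?E * ?R - 1\<^sub>m n = ?R * (?E - 1\<^sub>m n) * ?R"
    using reflection_conj_minus_one[OF E] by simp
  then have P1: "max_row_sum (?R * ?E * ?R - 1\<^sub>m n) \<le> exp ?x - 1"
    using order.trans[OF max_row_sum_reflection_conj[OF E1_carrier] E1] by simp
  have "?R * ?E * ?R - 1\<^sub>m n - ?R * b * ?R = ?R * (?E - 1\<^sub>m n - b) * ?R"
    using reflection_conj_diff[OF E1_carrier b] reflection_conj_minus_one[OF E] by simp
  then have P2: "max_row_sum (?R * ?E * ?R - 1\<^sub>m n - ?R * b * ?R) \<le> exp ?x - 1 - ?x"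
    using order.trans[OF max_row_sum_reflection_conj[OF E2_carrier] E2] by simp
  have "max_row_sum (?R * ?E * ?R * ?E - (1\<^sub>m n + (?R * b * ?R + b)))
      \<le> max_row_sum (?R * ?E * ?R - 1\<^sub>m n) * max_row_sum (?E - 1\<^sub>m n)
        + max_row_sum (?R * ?E * ?R - 1\<^sub>m n - ?R * b * ?R) + max_row_sum (?E - 1\<^sub>m n - b)"
    using E b by (intro max_row_sum_mult_minus_first_order) auto
  also have "\<dots> \<le> (exp ?x - 1) * (exp ?x - 1) + (exp ?x - 1 - ?x) + (exp ?x - 1 - ?x)"
    using P1 P2 E1 E2 by (intro add_mono mult_mono) (auto simp: max_row_sum_nonneg)
  finally show ?thesis by (simp add: power2_eq_square)
qed

lemma max_row_sum_reflection_trotter: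
  assumes b: "b \<in> carrier_mat n n"
  shows "max_row_sum ((reflection_mat n k * mexp b * reflection_mat n k * mexp b) ^\<^sub>m m
      - (1\<^sub>m n + (reflection_mat n k * b * reflection_mat n k + b)) ^\<^sub>m m)
    \<le> real m * exp (2 * max_row_sum b) ^ m
      * ((exp (max_row_sum b) - 1)\<^sup>2 + 2 * (exp (max_row_sum b) - 1 - max_row_sum b))"
proof -
  let ?R = "reflection_mat n k" and ?E = "mexp b" and ?x = "max_row_sum b"
  have E: "?E \<in> carrier_mat n n" using b by simp
  have RER: "?R * ?E * ?R \<in> carrier_mat n n"
    using mult_carrier_mat[OF mult_carrier_mat[OF reflection_mat_carrier E] reflection_mat_carrier] .
  have "max_row_sum (?R * ?E * ?R * ?E) \<le> max_row_sum (?R * ?E * ?R) * max_row_sum ?E"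
    using E by (intro max_row_sum_mult) simp
  also have "\<dots> \<le> exp ?x * exp ?x"
    using order.trans[OF max_row_sum_reflection_conj[OF E] max_row_sum_mexp[OF b]]
      max_row_sum_mexp[OF b]
    by (intro mult_mono) (auto simp: max_row_sum_nonneg)
  finally have Y: "max_row_sum (?R * ?E * ?R * ?E) \<le> exp (2 * ?x)"
    by (simp add: exp_add[symmetric])
  have "max_row_sum (1\<^sub>m n + (?R * b * ?R + b)) \<le> 1 + (?x + ?x)"
    using b max_row_sum_one_mat[of n] max_row_sum_reflection_conj[OF b]
    by (intro order.trans[OF max_row_sum_add] add_mono order.trans[OF max_row_sum_add]) auto
  also have "\<dots> \<le> exp (2 * ?x)" using exp_ge_add_one_self[of "2 * ?x"] by simp
  finally have Z: "max_row_sum (1\<^sub>m n + (?R * b * ?R + b)) \<le> exp (2 * ?x)" .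
  have "max_row_sum ((?R * ?E * ?R * ?E) ^\<^sub>m m - (1\<^sub>m n + (?R * b * ?R + b)) ^\<^sub>m m)
      \<le> real m * exp (2 * ?x) ^ m * max_row_sum (?R * ?E * ?R * ?E - (1\<^sub>m n + (?R * b * ?R + b)))"
    using mult_carrier_mat[OF RER E] b Y Z max_row_sum_nonneg[of b]
    by (intro max_row_sum_pow_diff_le) auto
  also have "\<dots> \<le> real m * exp (2 * ?x) ^ m * ((exp ?x - 1)\<^sup>2 + 2 * (exp ?x - 1 - ?x))"
    using max_row_sum_reflection_trotter_step[OF b] by (intro mult_left_mono) auto
  finally show ?thesis .
qed

text \<open>The first summand bounds the error of the product formula, the second that of
  (1 + A/m)^m against the exponential of A.\<close>
definition trotter_error_bound :: "real \<Rightarrow> real \<Rightarrow> nat \<Rightarrow> real" where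
  "trotter_error_bound \<beta> r m =
     real m * exp (2 * (\<beta> / real m)) ^ m
       * ((exp (\<beta> / real m) - 1)\<^sup>2 + 2 * (exp (\<beta> / real m) - 1 - \<beta> / real m))
     + (exp r - (1 + r / real m) ^ m)"

lemma trotter_error_bound_tendsto:
  assumes "0 \<le> \<beta>"
  shows "trotter_error_bound \<beta> r \<longlonglongrightarrow> 0"
proof -
  have "(\<lambda>m. real m * exp (2 * (\<beta> / real m)) ^ m
      * ((exp (\<beta> / real m) - 1)\<^sup>2 + 2 * (exp (\<beta> / real m) - 1 - \<beta> / real m))) \<longlonglongrightarrow> 0"
  proof (cases "\<beta> = 0")
    case False
    with assms have "0 < \<beta>" by simp
    then show ?thesis by real_asymp
  qed simp
  moreover have "(\<lambda>m. exp r - (1 + r / real m) ^ m) \<longlonglongrightarrow> 0"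
    using tendsto_diff[OF tendsto_const[of "exp r"] tendsto_exp_limit_sequentially[of r]] by simp
  ultimately show ?thesis unfolding trotter_error_bound_def by (rule tendsto_add_zero)
qed

lemma reflection_trotter_error:
  assumes H: "H \<in> carrier_mat n n" and k: "k \<le> n" and m: "0 < m"
  shows "mnorm ((reflection_mat n k * evol H (T / real (2 * m))) ^\<^sub>m (2 * m) * inclusion_mat n k
      - inclusion_mat n k * evol (compress k H) T)
    \<le> real n * trotter_error_bound (\<bar>T\<bar> * max_row_sum H / 2) (\<bar>T\<bar> * max_row_sum (compress k H)) m"
proof -
  let ?R = "reflection_mat n k" and ?V = "inclusion_mat n k"
  define b where "b = (- \<i> * of_real (T / real (2 * m))) \<cdot>\<^sub>m H"
  define A where "A = (- \<i> * of_real T) \<cdot>\<^sub>m compress k H"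
  define Y where "Y = ?R * mexp b * ?R * mexp b"
  define Z where "Z = 1\<^sub>m n + (?R * b * ?R + b)"
  define Z' where "Z' = 1\<^sub>m k + of_real (1 / real m) \<cdot>\<^sub>m A"
  have b: "b \<in> carrier_mat n n" using H by (simp add: b_def)
  have A: "A \<in> carrier_mat k k" by (simp add: A_def compress_def)
  have E: "mexp b \<in> carrier_mat n n" using b by simp
  have RE: "?R * mexp b \<in> carrier_mat n n" using mult_carrier_mat[OF reflection_mat_carrier E] .
  have Y: "Y \<in> carrier_mat n n"
    unfolding Y_def using mult_carrier_mat[OF mult_carrier_mat[OF RE reflection_mat_carrier] E] .
  have Z: "Z \<in> carrier_mat n n" and Z': "Z' \<in> carrier_mat k k"
    using b A by (simp_all add: Z_def Z'_def)
  have protocol: "(?R * evol H (T / real (2 * m))) ^\<^sub>m (2 * m) = Y ^\<^sub>m m"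
    unfolding evol_def b_def[symmetric] Y_def pow_mat_double[OF RE]
    using RE E by (simp add: assoc_mult_mat[of _ n n _ n _ n])
  have "2 \<cdot>\<^sub>m compress k b = of_real (1 / real m) \<cdot>\<^sub>m A"
    using H k m by (intro eq_matI) (auto simp: b_def A_def compress_def)
  then have ZV: "Z * ?V = ?V * Z'"
    unfolding Z_def Z'_def using reflection_average_mult_inclusion[OF b k] by simp
  have "max_row_sum (Y ^\<^sub>m m * ?V - ?V * mexp A)
      \<le> max_row_sum (Y ^\<^sub>m m - Z ^\<^sub>m m) + max_row_sum (mexp A - Z' ^\<^sub>m m)"
    using Y Z A Z' pow_mat_intertwine[OF Z Z' inclusion_mat_carrier ZV] max_row_sum_inclusion_mat
    by (intro max_row_sum_intertwined_diff) auto
  also have "\<dots> \<le> trotter_error_bound (\<bar>T\<bar> * max_row_sum H / 2) (\<bar>T\<bar> * max_row_sum (compress k H)) m"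
  proof -
    have "max_row_sum b = \<bar>T\<bar> * max_row_sum H / 2 / real m"
      using m by (simp add: b_def max_row_sum_smult norm_mult norm_divide)
    moreover have "max_row_sum A = \<bar>T\<bar> * max_row_sum (compress k H)"
      by (simp add: A_def max_row_sum_smult norm_mult)
    ultimately show ?thesis
      using max_row_sum_reflection_trotter[OF b, of k m] max_row_sum_mexp_minus_binomial[OF A m]
      unfolding trotter_error_bound_def Y_def Z_def Z'_def by (intro add_mono) auto
  qed
  finally have "max_row_sum (Y ^\<^sub>m m * ?V - ?V * mexp A)
      \<le> trotter_error_bound (\<bar>T\<bar> * max_row_sum H / 2) (\<bar>T\<bar> * max_row_sum (compress k H)) m" .
  then have "mnorm (Y ^\<^sub>m m * ?V - ?V * mexp A)
      \<le> real n * trotter_error_bound (\<bar>T\<bar> * max_row_sum H / 2) (\<bar>T\<bar> * max_row_sum (compress k H)) m"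
    using mnorm_le_max_row_sum[of "Y ^\<^sub>m m * ?V - ?V * mexp A"]
    by (simp add: order_trans[OF _ mult_left_mono])
  moreover have "evol (compress k H) T = mexp A" by (simp add: evol_def A_def)
  ultimately show ?thesis by (simp only: protocol)
qed

lemma reflection_trotter_tendsto:
  assumes H: "H \<in> carrier_mat n n" and k: "k \<le> n"
  shows "(\<lambda>m. mnorm ((reflection_mat n k * evol H (T / real (2 * m))) ^\<^sub>m (2 * m) * inclusion_mat n k
      - inclusion_mat n k * evol (compress k H) T)) \<longlonglongrightarrow> 0"
proof (rule tendsto_sandwich[OF _ _ tendsto_const
      tendsto_mult_right_zero[OF trotter_error_bound_tendsto]])
  show "\<forall>\<^sub>F m in sequentially. 0 \<le> mnorm ((reflection_mat n k * evol H (T / real (2 * m))) ^\<^sub>m (2 * m)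
      * inclusion_mat n k - inclusion_mat n k * evol (compress k H) T)"
    by (simp add: mnorm_nonneg)
  show "\<forall>\<^sub>F m in sequentially. mnorm ((reflection_mat n k * evol H (T / real (2 * m))) ^\<^sub>m (2 * m)
      * inclusion_mat n k - inclusion_mat n k * evol (compress k H) T)
    \<le> real n * trotter_error_bound (\<bar>T\<bar> * max_row_sum H / 2) (\<bar>T\<bar> * max_row_sum (compress k H)) m"
    using eventually_gt_at_top[of 0] by eventually_elim (rule reflection_trotter_error[OF H k])
  show "0 \<le> \<bar>T\<bar> * max_row_sum H / 2" by (simp add: max_row_sum_nonneg)
qed

section \<open>The bipartite simulation\<close>

lemma kron_carrier_mat:
  "A \<in> carrier_mat a b \<Longrightarrow> B \<in> carrier_mat c d \<Longrightarrow> kron A B \<in> carrier_mat (a * c) (b * d)"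
  unfolding kron_def by auto

lemma kron_reflection_mat_one:
  "kron (reflection_mat dA k) (1\<^sub>m dB) = reflection_mat (dA * dB) (k * dB)"
proof (cases "dB = 0")
  case False
  then have dB: "0 < dB" by simp
  show ?thesis
  proof (rule eq_matI)
    fix i j assume "i < dim_row (reflection_mat (dA * dB) (k * dB))"
      "j < dim_col (reflection_mat (dA * dB) (k * dB))"
    then have i: "i < dA * dB" and j: "j < dA * dB" by auto
    have "i div dB < dA" "j div dB < dA" using i j dB by (auto simp: div_less_iff_less_mult)
    moreover have "(i div dB = j div dB \<and> i mod dB = j mod dB) \<longleftrightarrow> i = j"
      by (metis div_mult_mod_eq)
    moreover have "i div dB < k \<longleftrightarrow> i < k * dB" using dB by (simp add: div_less_iff_less_mult)
    ultimately show "kron (reflection_mat dA k) (1\<^sub>m dB) $$ (i,j) = reflection_mat (dA * dB) (k * dB) $$ (i,j)"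
      using i j dB by (auto simp: kron_def)
  qed (auto simp: kron_def)
qed (auto simp: kron_def intro!: eq_matI)

lemma kron_inclusion_mat_one:
  "kron (inclusion_mat dA k) (1\<^sub>m dB) = inclusion_mat (dA * dB) (k * dB)"
proof (cases "dB = 0")
  case False
  then have dB: "0 < dB" by simp
  show ?thesis
  proof (rule eq_matI)
    fix i j assume "i < dim_row (inclusion_mat (dA * dB) (k * dB))"
      "j < dim_col (inclusion_mat (dA * dB) (k * dB))"
    then have i: "i < dA * dB" and j: "j < k * dB" by auto
    have "i div dB < dA" "j div dB < k" using i j dB by (auto simp: div_less_iff_less_mult)
    moreover have "(i div dB = j div dB \<and> i mod dB = j mod dB) \<longleftrightarrow> i = j"
      by (metis div_mult_mod_eq)
    ultimately show "kron (inclusion_mat dA k) (1\<^sub>m dB) $$ (i,j) = inclusion_mat (dA * dB) (k * dB) $$ (i,j)"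
      using i j dB by (auto simp: kron_def)
  qed (auto simp: kron_def)
qed (auto simp: kron_def intro!: eq_matI)

lemma compress_kron:
  assumes A: "A \<in> carrier_mat dA dA" and B: "B \<in> carrier_mat dB dB" and k: "k \<le> dA"
  shows "compress (k * dB) (kron A B) = kron (compress k A) B"
proof (rule eq_matI)
  fix i j assume "i < dim_row (kron (compress k A) B)" "j < dim_col (kron (compress k A) B)"
  then have i: "i < k * dB" and j: "j < k * dB" using B by (auto simp: kron_def compress_def)
  then have "0 < dB" by (cases dB) auto
  then have "i div dB < k" "j div dB < k" using i j by (auto simp: div_less_iff_less_mult)
  moreover have "i < dA * dB" "j < dA * dB"
    using i j k by (meson le_less_trans mult_le_mono1 not_le)+
  ultimately show "compress (k * dB) (kron A B) $$ (i,j) = kron (compress k A) B $$ (i,j)"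
    using A B i j k by (simp add: kron_def compress_def)
qed (use B in \<open>auto simp: kron_def compress_def\<close>)

lemma ext_ham_one_one:
  assumes "H \<in> carrier_mat (dA * dB) (dA * dB)"
  shows "ext_ham dA dB 1 1 H = H"
  using assms unfolding ext_ham_def by (intro eq_matI) (auto simp: Let_def)

lemma protocol_unitary_replicate:
  assumes "kron UA UB * evol H \<tau> \<in> carrier_mat N N"
  shows "protocol_unitary H N (replicate n (\<tau>, UA, UB)) = (kron UA UB * evol H \<tau>) ^\<^sub>m n"
  by (induction n) (use assms carrier_matD[OF assms] in \<open>simp_all add: pow_mat_Suc_left\<close>)

lemma achievable_rate_one_by_repetition:
  assumes H: "H \<in> carrier_mat (dA * dB) (dA * dB)"
    and UA: "unitary_op dA UA" and UB: "unitary_op dB UB"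
    and VA: "isometry_op dA dA' VA" and VB: "isometry_op dB dB' VB"
    and approx: "\<And>T \<epsilon>. 0 < T \<Longrightarrow> 0 < \<epsilon> \<Longrightarrow> \<exists>n. mnorm ((kron UA UB * evol H (T / real n)) ^\<^sub>m n
        * kron VA VB - kron VA VB * evol H' T) \<le> \<epsilon>"
  shows "achievable_rate dA dB H dA' dB' H' 1"
  unfolding achievable_rate_def
proof (intro allI impI)
  fix T \<epsilon> :: real assume T: "0 < T" and \<epsilon>: "0 < \<epsilon>"
  obtain n where err: "mnorm ((kron UA UB * evol H (T / real n)) ^\<^sub>m n
      * kron VA VB - kron VA VB * evol H' T) \<le> \<epsilon>"
    using approx[OF T \<epsilon>] by blast
  define ps where "ps = replicate n (T / real n, UA, UB)"
  have "kron UA UB * evol H (T / real n) \<in> carrier_mat (dA * dB) (dA * dB)"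
    using kron_carrier_mat[of UA dA dA UB dB dB] UA UB H
    by (intro mult_carrier_mat) (auto simp: unitary_op_def evol_def)
  then have "protocol_unitary (ext_ham dA dB 1 1 H) (dA * 1 * (dB * 1)) ps
      = (kron UA UB * evol H (T / real n)) ^\<^sub>m n"
    unfolding ps_def ext_ham_one_one[OF H] by (simp add: protocol_unitary_replicate)
  moreover have "1 * sum_list (map fst ps) \<le> T"
    using T by (simp add: ps_def sum_list_replicate)
  moreover have "\<forall>(tau, UA', UB') \<in> set ps.
      0 \<le> tau \<and> unitary_op (dA * 1) UA' \<and> unitary_op (dB * 1) UB'"
    using T UA UB by (simp add: ps_def)
  ultimately show "\<exists>rA rB VA VB ps. 0 < rA \<and> 0 < rB
      \<and> isometry_op (dA * rA) dA' VA \<and> isometry_op (dB * rB) dB' VB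
      \<and> (\<forall>(tau, UA, UB) \<in> set ps. 0 \<le> tau \<and> unitary_op (dA * rA) UA \<and> unitary_op (dB * rB) UB)
      \<and> 1 * sum_list (map fst ps) \<le> T
      \<and> mnorm (protocol_unitary (ext_ham dA dB rA rB H) (dA * rA * (dB * rB)) ps * kron VA VB
          - kron VA VB * evol H' T) \<le> \<epsilon>"
    using VA VB err by (intro exI[of _ 1] exI[of _ VA] exI[of _ VB] exI[of _ ps]) auto
qed

lemma sim_rate_ge_achievable_rate:
  "achievable_rate dA dB H dA' dB' H' \<gamma> \<Longrightarrow> 0 \<le> \<gamma> \<Longrightarrow>
    ereal \<gamma> \<le> sim_rate dA dB H dA' dB' H'"
  unfolding sim_rate_def by (rule Sup_upper) auto

theorem lemma1:
  fixes HA HB :: "complex mat" and dA dA' dB :: nat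
  assumes "hermitian_op dA HA" and "hermitian_op dB HB"
    and "1 \<le> dA'" and "dA' \<le> dA"
  shows "sim_rate dA dB (kron HA HB) dA' dB (kron (compress dA' HA) HB) \<ge> 1"
proof -
  have HA: "HA \<in> carrier_mat dA dA" and HB: "HB \<in> carrier_mat dB dB"
    using assms(1,2) by (auto simp: hermitian_op_def)
  have H: "kron HA HB \<in> carrier_mat (dA * dB) (dA * dB)" by (rule kron_carrier_mat[OF HA HB])
  have "achievable_rate dA dB (kron HA HB) dA' dB (kron (compress dA' HA) HB) 1"
  proof (rule achievable_rate_one_by_repetition[OF H unitary_reflection_mat[of dA dA'] unitary_one_mat
        isometry_inclusion_mat[OF assms(4)] isometry_one_mat])
    fix T \<epsilon> :: real assume "0 < \<epsilon>"
    have "dA' * dB \<le> dA * dB" using assms(4) by simp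
    from order_tendstoD(2)[OF reflection_trotter_tendsto[OF H this, of T] \<open>0 < \<epsilon>\<close>]
    obtain m where "mnorm ((reflection_mat (dA * dB) (dA' * dB) * evol (kron HA HB) (T / real (2 * m)))
        ^\<^sub>m (2 * m) * inclusion_mat (dA * dB) (dA' * dB)
      - inclusion_mat (dA * dB) (dA' * dB) * evol (compress (dA' * dB) (kron HA HB)) T) < \<epsilon>"
      by (auto simp: eventually_sequentially)
    then show "\<exists>n. mnorm ((kron (reflection_mat dA dA') (1\<^sub>m dB) * evol (kron HA HB) (T / real n)) ^\<^sub>m n
        * kron (inclusion_mat dA dA') (1\<^sub>m dB)
      - kron (inclusion_mat dA dA') (1\<^sub>m dB) * evol (kron (compress dA' HA) HB) T) \<le> \<epsilon>"
      unfolding kron_reflection_mat_one kron_inclusion_mat_one compress_kron[OF HA HB assms(4), symmetric]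
      by (intro exI[of _ "2 * m"]) simp
  qed
  then show ?thesis using sim_rate_ge_achievable_rate[of _ _ _ _ _ _ 1] by (simp add: one_ereal_def)
qed

end
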